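(* Let $\mathbf{C}^+=\{\omega=x+\sqrt{-1}y\in\mathbf{C}: y>0\}$ and let $\mathcal H^n$ be the space of symmetric complex $n\times n$ matrices $M$ ($M^T=M$) with positive definite imaginary part $\operatorname{Im}M>0$. Let $K$ be a compact space and $F:K\times\mathbf{C}^+\to\mathcal H^n$ a continuous map such that for each $u\in K$ the map $\omega\mapsto F(u,\omega)$ is holomorphic on $\mathbf{C}^+$. Let $U_1=\{\omega=x+\sqrt{-1}y\in\mathbf{C}: -1<x<1,\ y\ge1\}$ and $F'=\partial F/\partial\omega$. Then there are constants $C_1>0$ and $C_2$ such that for all $(u,\omega)\in K\times U_1$, $$\det\operatorname{Im}F(u,\omega)\ge C_1y^{-n}\quad\text{and}\quad|\det F'(u,\omega)|\le C_2.$$ *)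

theory Defs
  imports "HOL-Analysis.Analysis" "HOL-Complex_Analysis.Complex_Analysis"
begin

definition upper_half_plane :: "complex set" where
  "upper_half_plane = {w. Im w > 0}"

definition U1 :: "complex set" where
  "U1 = {w. -1 < Re w \<and> Re w < 1 \<and> Im w \<ge> 1}"

definition Im_mat :: "complex^'n^'n \<Rightarrow> real^'n^'n" where
  "Im_mat M = (\<chi> i j. Im (M $ i $ j))"

definition pos_def_real :: "real^'n^'n \<Rightarrow> bool" where
  "pos_def_real A \<longleftrightarrow> transpose A = A \<and> (\<forall>x. x \<noteq> 0 \<longrightarrow> x \<bullet> (A *v x) > 0)"

definition siegel_H :: "(complex^'n^'n) set" where
  "siegel_H = {M. transpose M = M \<and> pos_def_real (Im_mat M)}"

definition mat_deriv :: "(complex \<Rightarrow> complex^'n^'n) \<Rightarrow> complex \<Rightarrow> complex^'n^'n" where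
  "mat_deriv G w = (\<chi> i j. deriv (\<lambda>z. G z $ i $ j) w)"

end

theory Submission
  imports Defs
begin

text \<open>
  For a real vector \<open>v \<noteq> 0\<close>, the function \<open>w \<mapsto> v\<^sup>T F(u,w) v\<close> is a holomorphic
  self-map of the upper half plane, so the Schwarz--Pick lemma compares it with its value
  at \<open>\<i>\<close>: its imaginary part at \<open>w\<close> is at least \<open>Im w / |w + \<i>|\<^sup>2\<close> times the one at \<open>\<i>\<close>, and
  its distance from the value at \<open>\<i>\<close> is at most \<open>|w + \<i>|\<^sup>2 / Im w\<close> times that imaginary part.
  On \<open>U1\<close> we have \<open>|w + \<i>|\<^sup>2 \<le> 5 (Im w)\<^sup>2\<close>, and compactness of \<open>K\<close> gives a uniform
  \<open>m > 0\<close> with \<open>Im F(u,\<i>) \<ge> m\<close>; so \<open>Im F(u,w) \<ge> m / (5 Im w)\<close> as quadratic forms, which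
  bounds its determinant from below by symmetric Gaussian elimination. By polarization the
  second estimate keeps every entry of \<open>F(u,\<cdot>)\<close> within \<open>O(Im w)\<close> of its value at \<open>\<i>\<close> on the
  disc of radius \<open>Im w / 2\<close> about \<open>w\<close>, and Cauchy's estimate turns this into a uniform bound
  on the entries of \<open>F'\<close>, hence on \<open>det F'\<close>.
\<close>

section \<open>Determinant bounds\<close>

lemma matrix_vector_mult_axis_nth: "((A::real^'n^'m) *v axis j 1) $ i = A$i$j"
  by (simp add: matrix_vector_mult_basis column_def)

definition row_replaced_identity :: "'n::finite \<Rightarrow> real^'n \<Rightarrow> real^'n^'n" where
  "row_replaced_identity k r = (\<chi> i. if i = k then r else axis i 1)"

lemma row_replaced_identity_nth:
  "row_replaced_identity k r $ i $ j = (if i = k then r$j else of_bool (j = i))"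
  by (simp add: row_replaced_identity_def axis_def)

lemma row_replaced_identity_mult_vec:
  "row_replaced_identity k r *v v = v + (r \<bullet> v - v$k) *\<^sub>R axis k 1"
  by (auto simp: vec_eq_iff row_replaced_identity_nth matrix_vector_mult_def inner_vec_def axis_def
      mult.commute)

lemma vector_row_replaced_identity_mult:
  "v v* row_replaced_identity k r = v + v$k *\<^sub>R (r - axis k 1)"
proof -
  let ?X = "row_replaced_identity k r"
  have "(\<Sum>j\<in>UNIV. ?X $ j $ i * v$j) = r$i * v$k + (if i = k then 0 else v$i)" for i
  proof -
    have "(\<Sum>j\<in>UNIV. ?X $ j $ i * v$j) = ?X $ k $ i * v$k + (\<Sum>j\<in>UNIV - {k}. ?X $ j $ i * v$j)"
      by (simp add: sum.remove)
    also have "\<dots> = r$i * v$k + (if i = k then 0 else v$i)"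
      by (auto simp: row_replaced_identity_nth of_bool_def[symmetric])
    finally show ?thesis .
  qed
  then show ?thesis
    by (auto simp: vec_eq_iff vector_matrix_mult_def axis_def algebra_simps mult.commute)
qed

lemma det_row_replaced_identity:
  fixes r :: "real^'n"
  shows "det (row_replaced_identity k r) = r$k"
proof -
  define D :: "real^'n^'n" where "D = (\<chi> i. if i = k then r$k *s axis k 1 else axis i 1)"
  have rowD: "row i D = (if i = k then r$k *s axis k 1 else axis i 1)" for i
    by (simp add: D_def row_def vec_eq_iff)
  have "r - r$k *s axis k 1 = (\<Sum>j\<in>UNIV - {k}. r$j *s row j D)"
    by (auto simp: vec_eq_iff rowD axis_def of_bool_def[symmetric])
  also have "\<dots> \<in> vec.span {row j D |j. j \<noteq> k}"
    by (intro vec.span_sum vec.span_scale vec.span_base) auto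
  finally have "r - r$k *s axis k 1 \<in> vec.span {row j D |j. j \<noteq> k}" .
  from det_row_span[OF this]
  have "det (row_replaced_identity k r) = det D"
    by (simp add: row_replaced_identity_def rowD cong: if_cong)
  also have "D = (\<chi> i. if i = k then r$k *s axis i 1 else axis i 1)"
    by (simp add: D_def vec_eq_iff)
  also have "det \<dots> = r$k * det (mat 1 :: real^'n^'n)"
    using det_row_mul[of k "r$k" "\<lambda>i. axis i 1" "\<lambda>i. axis i 1"]
    by (simp add: mat_def axis_def vec_eq_iff eq_commute)
  also have "\<dots> = r$k"
    by simp
  finally show ?thesis .
qed

text \<open>One step of symmetric Gaussian elimination, with the pivot normalised to \<open>1\<close>.\<close>

lemma symmetric_pivot_congruence:
  fixes A :: "real^'n^'n"
  assumes sym: "transpose A = A" and pos: "0 < A$k$k"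
  obtains X :: "real^'n^'n" where
    "(det X)\<^sup>2 * A$k$k = 1"
    "(transpose X ** A ** X) *v axis k 1 = axis k 1"
    "\<And>i. i \<noteq> k \<Longrightarrow> A *v axis i 1 = axis i 1 \<Longrightarrow>
       X *v axis i 1 = axis i 1 \<and> transpose X *v axis i 1 = axis i 1"
    "\<And>v. v$k = 0 \<Longrightarrow> \<exists>t. X *v v = v + t *\<^sub>R axis k 1"
proof
  define a where "a = A$k$k"
  define r :: "real^'n" where "r = (\<chi> i. if i = k then 1 / sqrt a else - A$i$k / a)"
  define X where "X = row_replaced_identity k r"
  have a: "0 < a"
    using pos by (simp add: a_def)
  show "(det X)\<^sup>2 * A$k$k = 1"
    using a by (simp add: X_def det_row_replaced_identity r_def a_def[symmetric] power2_eq_square)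
  have "A *v axis k 1 + a *\<^sub>R (r - axis k 1) = (a / sqrt a) *\<^sub>R axis k 1"
    using a by (auto simp: vec_eq_iff matrix_vector_mult_axis_nth r_def a_def)
      (simp_all add: axis_def algebra_simps)
  moreover have "X *v axis k 1 = (1 / sqrt a) *\<^sub>R axis k 1"
    by (simp add: X_def row_replaced_identity_mult_vec inner_axis r_def algebra_simps)
  ultimately have "transpose X *v (A *v (X *v axis k 1)) = (1 / sqrt a) *\<^sub>R (a / sqrt a) *\<^sub>R axis k 1"
    by (simp add: matrix_vector_mult_scaleR X_def vector_row_replaced_identity_mult
        matrix_vector_mult_axis_nth a_def algebra_simps)
  then show "(transpose X ** A ** X) *v axis k 1 = axis k 1"
    using a by (simp add: matrix_vector_mul_assoc[symmetric] del: transpose_matrix_vector)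
  show "X *v axis i 1 = axis i 1 \<and> transpose X *v axis i 1 = axis i 1"
    if "i \<noteq> k" and Ai: "A *v axis i 1 = axis i 1" for i
  proof -
    have "A$k$i = (A *v axis i 1) $ k"
      by (simp add: matrix_vector_mult_axis_nth)
    also have "\<dots> = 0"
      using Ai that by (simp add: axis_def)
    finally have "A$k$i = 0" .
    then have "r$i = 0"
      using that arg_cong[OF sym, of "\<lambda>M. M$k$i"] by (simp add: r_def transpose_def)
    moreover have "axis i 1 $ k = (0::real)"
      using that by (simp add: axis_def)
    ultimately show ?thesis
      by (simp add: X_def row_replaced_identity_mult_vec vector_row_replaced_identity_mult inner_axis)
  qed
  show "\<exists>t. X *v v = v + t *\<^sub>R axis k 1" if "v$k = 0" for v
    using that by (auto simp: X_def row_replaced_identity_mult_vec)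
qed

lemma inner_transpose_mult_vec: "(v::real^'n) \<bullet> (transpose X *v w) = (X *v v) \<bullet> w"
  by (metis inner_commute dot_lmul_matrix transpose_matrix_vector)

lemma det_ge_power_card:
  fixes A :: "real^'n^'n"
  assumes "0 < l" and "transpose A = A"
    and "\<And>i. i \<notin> S \<Longrightarrow> A *v axis i 1 = axis i 1"
    and "\<And>v. (\<And>i. i \<notin> S \<Longrightarrow> v$i = 0) \<Longrightarrow> l * (v \<bullet> v) \<le> v \<bullet> (A *v v)"
  shows "l ^ card S \<le> det A"
proof -
  have "finite S" by simp
  from this assms(2-4) show ?thesis
  proof (induction S arbitrary: A rule: finite_induct)
    case empty
    then have "A = mat 1"
      by (simp add: vec_eq_iff matrix_vector_mult_axis_nth[symmetric])
    then show ?case by simp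
  next
    case (insert k S)
    have "l * ((axis k 1 :: real^'n) \<bullet> axis k 1) \<le> axis k 1 \<bullet> (A *v axis k 1)"
      by (rule insert.prems(3)) (simp add: axis_def)
    then have la: "l \<le> A$k$k"
      by (simp add: inner_axis' matrix_vector_mult_axis_nth)
    with \<open>0 < l\<close> have "0 < A$k$k" by linarith
    then obtain X where detX: "(det X)\<^sup>2 * A$k$k = 1"
      and Xk: "(transpose X ** A ** X) *v axis k 1 = axis k 1"
      and Xi: "\<And>i. i \<noteq> k \<Longrightarrow> A *v axis i 1 = axis i 1 \<Longrightarrow>
                 X *v axis i 1 = axis i 1 \<and> transpose X *v axis i 1 = axis i 1"
      and Xv: "\<And>v. v$k = 0 \<Longrightarrow> \<exists>t. X *v v = v + t *\<^sub>R axis k 1"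
      using symmetric_pivot_congruence[OF insert.prems(1)] by blast
    define B where "B = transpose X ** A ** X"
    have Bv: "B *v v = transpose X *v (A *v (X *v v))" for v
      by (simp add: B_def matrix_vector_mul_assoc matrix_mul_assoc del: transpose_matrix_vector)
    have "l ^ card S \<le> det B"
    proof (rule insert.IH)
      show "transpose B = B"
        by (simp add: B_def matrix_transpose_mul insert.prems(1) matrix_mul_assoc)
      show "B *v axis i 1 = axis i 1" if "i \<notin> S" for i
      proof (cases "i = k")
        case True
        then show ?thesis using Xk by (simp add: B_def)
      next
        case False
        with that insert.prems(2) have "A *v axis i 1 = axis i 1" by simp
        with Xi[OF False] show ?thesis by (simp only: Bv)
      qed
      show "l * (v \<bullet> v) \<le> v \<bullet> (B *v v)" if v: "\<And>i. i \<notin> S \<Longrightarrow> v$i = 0" for v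
      proof -
        have "v$k = 0" using v insert.hyps(2) .
        then obtain t where w: "X *v v = v + t *\<^sub>R axis k 1" using Xv by blast
        have "l * (v \<bullet> v) \<le> l * ((X *v v) \<bullet> (X *v v))"
          using \<open>0 < l\<close> \<open>v$k = 0\<close>
          by (simp add: w inner_add_left inner_add_right inner_axis inner_axis')
        also have "\<dots> \<le> (X *v v) \<bullet> (A *v (X *v v))"
          by (rule insert.prems(3)) (use v in \<open>auto simp: w axis_def\<close>)
        also have "\<dots> = v \<bullet> (B *v v)"
          by (simp only: Bv inner_transpose_mult_vec)
        finally show ?thesis .
      qed
    qed
    then have "l * l ^ card S \<le> A$k$k * det B"
      using la \<open>0 < l\<close> by (simp add: mult_mono)
    also have "A$k$k * det B = ((det X)\<^sup>2 * A$k$k) * det A"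
      by (simp add: B_def det_mul power2_eq_square)
    also have "\<dots> = det A"
      using detX by simp
    finally show ?case
      using insert.hyps by simp
  qed
qed

lemma det_ge_power_of_quadratic_form_ge:
  fixes A :: "real^'n^'n"
  assumes "0 < l" and "transpose A = A" and "\<And>v. l * (v \<bullet> v) \<le> v \<bullet> (A *v v)"
  shows "l ^ CARD('n) \<le> det A"
  using det_ge_power_card[of l A UNIV] assms by simp

lemma norm_det_le:
  fixes M :: "'a::real_normed_field^'n^'n"
  assumes "\<And>i j. norm (M$i$j) \<le> c"
  shows "norm (det M) \<le> fact CARD('n) * c ^ CARD('n)"
proof -
  have "norm (det M) \<le>
      (\<Sum>p | p permutes (UNIV::'n set). norm (of_int (sign p) * (\<Prod>i\<in>UNIV. M$i$p i)))"
    unfolding det_def by (rule norm_sum)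
  also have "\<dots> \<le> (\<Sum>p | p permutes (UNIV::'n set). c ^ CARD('n))"
  proof (rule sum_mono)
    fix p
    have "norm (of_int (sign p) * (\<Prod>i\<in>UNIV. M$i$p i) :: 'a) = (\<Prod>i\<in>UNIV. norm (M$i$p i))"
      by (simp add: norm_mult prod_norm sign_def)
    also have "\<dots> \<le> (\<Prod>i\<in>(UNIV::'n set). c)"
      by (intro prod_mono) (auto simp: assms)
    finally show "norm (of_int (sign p) * (\<Prod>i\<in>UNIV. M$i$p i)) \<le> c ^ CARD('n)"
      by simp
  qed
  also have "\<dots> = fact CARD('n) * c ^ CARD('n)"
    by (simp add: card_permutations)
  finally show ?thesis .
qed

section \<open>The Schwarz--Pick lemma on the upper half plane\<close>

lemma norm_diff_lt_norm_diff_cnj: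
  assumes "0 < Im w" and "0 < Im a"
  shows "cmod (w - a) < cmod (w - cnj a)"
proof -
  have "(Im w - Im a)\<^sup>2 < (Im w + Im a)\<^sup>2"
    using assms by (simp add: power2_eq_square algebra_simps)
  then have "(cmod (w - a))\<^sup>2 < (cmod (w - cnj a))\<^sup>2"
    by (simp add: cmod_power2)
  then show ?thesis
    by (simp add: power_less_imp_less_base)
qed

lemma Im_Cayley_inverse_pos:
  assumes "cmod \<zeta> < 1"
  shows "0 < Im (\<i> * (1 + \<zeta>) / (1 - \<zeta>))"
proof -
  have "(Re \<zeta>)\<^sup>2 + (Im \<zeta>)\<^sup>2 < 1"
    using assms by (simp add: cmod_power2[symmetric] abs_square_less_1)
  then have "0 < (1 + Re \<zeta>) * (1 - Re \<zeta>) - Im \<zeta> * Im \<zeta>"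
    by (simp add: power2_eq_square algebra_simps)
  moreover have "Im (\<i> * (1 + \<zeta>) / (1 - \<zeta>)) =
      ((1 + Re \<zeta>) * (1 - Re \<zeta>) - Im \<zeta> * Im \<zeta>) / (cmod (1 - \<zeta>))\<^sup>2"
    by (simp add: Im_divide Re_divide cmod_power2 algebra_simps)
  moreover have "1 - \<zeta> \<noteq> 0"
    using assms by auto
  ultimately show ?thesis by simp
qed

lemma Schwarz_Pick_upper_half_plane:
  assumes hol: "g holomorphic_on upper_half_plane"
    and maps: "\<And>w. w \<in> upper_half_plane \<Longrightarrow> g w \<in> upper_half_plane"
    and z: "z \<in> upper_half_plane"
  shows "cmod (g z - g \<i>) * cmod (z + \<i>) \<le> cmod (z - \<i>) * cmod (g z - cnj (g \<i>))"
proof -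
  define a where "a = g \<i>"
  have a: "0 < Im a"
    using maps[of \<i>] by (simp add: a_def upper_half_plane_def)
  have gH: "0 < Im (g w)" if "0 < Im w" for w
    using maps[of w] that by (simp add: upper_half_plane_def)
  txt \<open>\<open>h\<close> is \<open>g\<close> transported to a self-map of the unit disc fixing \<open>0\<close>, via the Cayley
    transform \<open>\<psi>\<close> and a Moebius map sending \<open>a\<close> to \<open>0\<close>.\<close>
  define \<psi> where "\<psi> = (\<lambda>\<zeta>::complex. \<i> * (1 + \<zeta>) / (1 - \<zeta>))"
  define h where "h = (\<lambda>\<zeta>. (g (\<psi> \<zeta>) - a) / (g (\<psi> \<zeta>) - cnj a))"
  have \<psi>H: "0 < Im (\<psi> \<zeta>)" if "\<zeta> \<in> ball 0 1" for \<zeta>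
    using Im_Cayley_inverse_pos[of \<zeta>] that by (simp add: \<psi>_def)
  have "(g \<circ> \<psi>) holomorphic_on ball 0 1"
  proof (rule holomorphic_on_compose_gen[OF _ hol])
    show "\<psi> holomorphic_on ball 0 1"
      unfolding \<psi>_def by (intro holomorphic_intros) auto
    show "\<psi> ` ball 0 1 \<subseteq> upper_half_plane"
      using \<psi>H by (auto simp: upper_half_plane_def)
  qed
  moreover have "g (\<psi> \<zeta>) - cnj a \<noteq> 0" if "\<zeta> \<in> ball 0 1" for \<zeta>
    using gH[OF \<psi>H[OF that]] a by (auto simp: complex_eq_iff)
  ultimately have "h holomorphic_on ball 0 1"
    unfolding h_def o_def by (intro holomorphic_intros) auto
  moreover have "h 0 = 0"
    by (simp add: h_def \<psi>_def a_def)
  moreover have "norm (h \<zeta>) < 1" if "norm \<zeta> < 1" for \<zeta>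
    using norm_diff_lt_norm_diff_cnj[OF gH[OF \<psi>H] a] that
    by (simp add: h_def norm_divide divide_less_eq)
  moreover define \<zeta> where "\<zeta> = (z - \<i>) / (z + \<i>)"
  have zi: "z + \<i> \<noteq> 0" and "0 < Im z"
    using z by (auto simp: upper_half_plane_def complex_eq_iff)
  then have "norm \<zeta> < 1"
    using norm_diff_lt_norm_diff_cnj[of z \<i>] by (simp add: \<zeta>_def norm_divide divide_less_eq)
  ultimately have "norm (h \<zeta>) \<le> norm \<zeta>"
    by (rule Schwarz_Lemma(1))
  moreover have "\<psi> \<zeta> = z"
  proof -
    have "1 + \<zeta> = 2 * z / (z + \<i>)" and "1 - \<zeta> = 2 * \<i> / (z + \<i>)"
      using zi by (simp_all add: \<zeta>_def field_simps)
    then show ?thesis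
      using zi by (simp add: \<psi>_def)
  qed
  moreover have "g z - cnj a \<noteq> 0"
    using gH[OF \<open>0 < Im z\<close>] a by (auto simp: complex_eq_iff)
  ultimately show ?thesis
    using zi by (simp add: h_def \<zeta>_def a_def norm_divide divide_le_eq le_divide_eq field_simps)
qed

lemma Schwarz_Pick_upper_half_plane_Im:
  assumes "g holomorphic_on upper_half_plane"
    and "\<And>w. w \<in> upper_half_plane \<Longrightarrow> g w \<in> upper_half_plane"
    and "z \<in> upper_half_plane"
  shows "Im z * (cmod (g z - cnj (g \<i>)))\<^sup>2 \<le> Im (g z) * Im (g \<i>) * (cmod (z + \<i>))\<^sup>2"
proof -
  have "(cmod (g z - g \<i>) * cmod (z + \<i>))\<^sup>2 \<le> (cmod (z - \<i>) * cmod (g z - cnj (g \<i>)))\<^sup>2"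
    using Schwarz_Pick_upper_half_plane[OF assms] by (intro power_mono) auto
  moreover have "(cmod (g z - cnj (g \<i>)))\<^sup>2 = (cmod (g z - g \<i>))\<^sup>2 + 4 * Im (g z) * Im (g \<i>)"
    and "(cmod (z + \<i>))\<^sup>2 = (cmod (z - \<i>))\<^sup>2 + 4 * Im z"
    unfolding cmod_power2 by (simp_all add: power2_eq_square algebra_simps)
  ultimately show ?thesis
    by (simp add: power_mult_distrib algebra_simps)
qed

lemma upper_half_plane_self_map_bounds:
  assumes hol: "g holomorphic_on upper_half_plane"
    and maps: "\<And>w. w \<in> upper_half_plane \<Longrightarrow> g w \<in> upper_half_plane"
    and z: "z \<in> upper_half_plane"
  shows "Im (g \<i>) * Im z \<le> Im (g z) * (cmod (z + \<i>))\<^sup>2"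
    and "cmod (g z - g \<i>) * Im z \<le> Im (g \<i>) * (cmod (z + \<i>))\<^sup>2"
proof -
  define p q y D W where "p = Im (g z)" and "q = Im (g \<i>)" and "y = Im z"
    and "D = (cmod (z + \<i>))\<^sup>2" and "W = (cmod (g z - cnj (g \<i>)))\<^sup>2"
  have pos: "0 < p" "0 < q" "0 < y"
    using maps[OF z] maps[of \<i>] z by (simp_all add: p_def q_def y_def upper_half_plane_def)
  have key: "y * W \<le> p * q * D"
    using Schwarz_Pick_upper_half_plane_Im[OF hol maps z] by (simp add: p_def q_def y_def D_def W_def)
  have Im_le: "p + q \<le> cmod (g z - cnj (g \<i>))"
    using abs_Im_le_cmod[of "g z - cnj (g \<i>)"] by (simp add: p_def q_def)
  have "q * q \<le> W"
    using Im_le pos unfolding W_def power2_eq_square by (intro mult_mono) auto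
  with key pos(3) have "q * (y * q) \<le> q * (p * D)"
    by (smt (verit) mult.commute mult.left_commute mult_left_mono)
  then show "Im (g \<i>) * Im z \<le> Im (g z) * (cmod (z + \<i>))\<^sup>2"
    using pos by (simp add: p_def q_def y_def D_def mult.commute)
  have "cmod (g z - g \<i>) \<le> cmod (g z - cnj (g \<i>))"
    using norm_diff_lt_norm_diff_cnj[of "g z" "g \<i>"] pos by (simp add: p_def q_def)
  then have "cmod (g z - g \<i>) * p \<le> W"
    using Im_le pos unfolding W_def power2_eq_square by (intro mult_mono) auto
  with key pos(3) have "p * (cmod (g z - g \<i>) * y) \<le> p * (q * D)"
    by (smt (verit) mult.commute mult.left_commute mult_left_mono)
  then show "cmod (g z - g \<i>) * Im z \<le> Im (g \<i>) * (cmod (z + \<i>))\<^sup>2"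
    using pos by (simp add: p_def q_def y_def D_def)
qed

section \<open>Compact families\<close>

lemma compact_uniformly_positive_definite:
  fixes A :: "'a::topological_space \<Rightarrow> real^'n^'n"
  assumes "compact K" and "continuous_on K A"
    and pd: "\<And>u v. u \<in> K \<Longrightarrow> v \<noteq> 0 \<Longrightarrow> 0 < v \<bullet> (A u *v v)"
  obtains m where "0 < m" and "\<And>u v. u \<in> K \<Longrightarrow> m * (v \<bullet> v) \<le> v \<bullet> (A u *v v)"
proof (cases "K = {}")
  case True
  then show ?thesis using that[of 1] by simp
next
  case False
  define f where "f = (\<lambda>p::'a \<times> (real^'n). snd p \<bullet> (A (fst p) *v snd p))"
  have "continuous_on (K \<times> sphere 0 1) (\<lambda>p::'a \<times> (real^'n). A (fst p))"
    by (rule continuous_on_compose2[OF assms(2) continuous_on_fst]) auto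
  then have "continuous_on (K \<times> sphere 0 1) f"
    unfolding f_def matrix_vector_mult_def by (intro continuous_intros)
  moreover have "compact (K \<times> sphere (0::real^'n) 1)" and "K \<times> sphere (0::real^'n) 1 \<noteq> {}"
    using assms(1) False by (simp_all add: compact_Times)
  ultimately obtain p0 where p0: "p0 \<in> K \<times> sphere 0 1"
    and min: "\<And>p. p \<in> K \<times> sphere 0 1 \<Longrightarrow> f p0 \<le> f p"
    using continuous_attains_inf[of "K \<times> sphere 0 1" f] by blast
  have "0 < f p0"
    using p0 pd[of "fst p0" "snd p0"] by (force simp: f_def mem_Times_iff)
  moreover have "f p0 * (v \<bullet> v) \<le> v \<bullet> (A u *v v)" if "u \<in> K" for u v
  proof (cases "v = 0")
    case False
    define e where "e = (1 / norm v) *\<^sub>R v"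
    have "e \<in> sphere 0 1"
      using False by (simp add: e_def)
    with that have "f p0 \<le> f (u, e)"
      by (simp add: min)
    then have "f p0 * (norm v)\<^sup>2 \<le> f (u, e) * (norm v)\<^sup>2"
      by (simp add: mult_right_mono)
    also have "f (u, e) = (v \<bullet> (A u *v v)) / (norm v)\<^sup>2"
      by (simp add: f_def e_def matrix_vector_mult_scaleR power2_eq_square)
    also have "\<dots> * (norm v)\<^sup>2 = v \<bullet> (A u *v v)"
      using False by simp
    finally show ?thesis
      by (simp add: power2_norm_eq_inner)
  qed simp
  ultimately show ?thesis
    using that by blast
qed

lemma compact_entries_bounded:
  fixes f :: "'a::topological_space \<Rightarrow> 'b::real_normed_vector^'n^'n"
  assumes "compact K" and "continuous_on K f"
  obtains B where "0 < B" and "\<And>u k l. u \<in> K \<Longrightarrow> norm (f u $ k $ l) \<le> B"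
proof -
  obtain B where "0 < B" and B: "\<And>u. u \<in> K \<Longrightarrow> norm (f u) \<le> B"
    using compact_imp_bounded[OF compact_continuous_image[OF assms(2,1)]]
    unfolding bounded_pos by blast
  show ?thesis
  proof (rule that)
    show "0 < B" by fact
    show "norm (f u $ k $ l) \<le> B" if "u \<in> K" for u k l
      using Finite_Cartesian_Product.norm_nth_le[of "f u $ k" l]
        Finite_Cartesian_Product.norm_nth_le[of "f u" k] B[OF that] by linarith
  qed
qed

section \<open>Holomorphic maps into the Siegel upper half space\<close>

lemma sum_of_real_axis_mult:
  "(\<Sum>j\<in>UNIV. of_real (axis k 1 $ j) * f j) = (f k :: 'a::real_algebra_1)"
proof -
  have "(\<Sum>j\<in>UNIV. of_real (axis k 1 $ j) * f j) = (\<Sum>j\<in>UNIV. if j = k then f j else 0)"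
    by (rule sum.cong) (auto simp: axis_def)
  then show ?thesis by simp
qed

definition quad_form :: "real^'n \<Rightarrow> complex^'n^'n \<Rightarrow> complex" where
  "quad_form v M = (\<Sum>i\<in>UNIV. of_real (v$i) * (\<Sum>j\<in>UNIV. of_real (v$j) * M$i$j))"

lemma Im_quad_form: "Im (quad_form v M) = v \<bullet> (Im_mat M *v v)"
  by (simp add: quad_form_def Im_mat_def inner_vec_def matrix_vector_mult_def Im_sum
      sum_distrib_left ac_simps)

lemma quad_form_zero [simp]: "quad_form 0 M = 0"
  by (simp add: quad_form_def)

lemma quad_form_axis: "quad_form (axis i 1) M = M$i$i"
  by (simp add: quad_form_def sum_of_real_axis_mult)

lemma quad_form_axis_add_axis:
  "quad_form (axis i 1 + axis j 1) M = M$i$i + M$i$j + M$j$i + M$j$j"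
  by (simp add: quad_form_def distrib_right sum.distrib sum_of_real_axis_mult)

lemma quad_form_polarization:
  fixes M :: "complex^'n^'n"
  assumes "M $ j $ i = M $ i $ j"
  shows "2 * M $ i $ j =
    quad_form (axis i 1 + axis j 1) M - quad_form (axis i 1) M - quad_form (axis j 1) M"
  using assms by (simp add: quad_form_axis quad_form_axis_add_axis)

lemma siegel_H_symmetric: "(M :: complex^'n^'n) \<in> siegel_H \<Longrightarrow> M $ j $ i = M $ i $ j"
  unfolding siegel_H_def by (metis (mono_tags) mem_Collect_eq transpose_def vec_lambda_beta)

lemma quad_form_in_upper_half_plane:
  "M \<in> siegel_H \<Longrightarrow> v \<noteq> 0 \<Longrightarrow> quad_form v M \<in> upper_half_plane"
  by (simp add: siegel_H_def pos_def_real_def upper_half_plane_def Im_quad_form)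

lemma U1_norm_add_i_le:
  assumes "w \<in> U1"
  shows "(cmod (w + \<i>))\<^sup>2 \<le> 5 * (Im w)\<^sup>2"
proof -
  have "\<bar>Re w\<bar> < 1" and "1 \<le> Im w"
    using assms by (auto simp: U1_def)
  moreover have "(cmod (w + \<i>))\<^sup>2 = (Re w)\<^sup>2 + (Im w + 1)\<^sup>2"
    by (simp add: cmod_power2)
  moreover have "(Re w)\<^sup>2 \<le> 1"
    using \<open>\<bar>Re w\<bar> < 1\<close> by (simp add: abs_square_le_1)
  moreover have "Im w \<le> (Im w)\<^sup>2" and "1 \<le> (Im w)\<^sup>2"
    using \<open>1 \<le> Im w\<close> one_le_power[of "Im w" 2] by (simp_all add: power2_eq_square)
  moreover have "(Im w + 1)\<^sup>2 = (Im w)\<^sup>2 + 2 * Im w + 1"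
    by (simp add: power2_eq_square algebra_simps)
  ultimately show ?thesis
    by linarith
qed

lemma U1_half_ball_bounds:
  assumes "w \<in> U1" and "z \<in> ball w (Im w / 2)"
  shows "Im w / 2 < Im z" and "(cmod (z + \<i>))\<^sup>2 < 17 / 2 * (Im w)\<^sup>2"
proof -
  have w: "\<bar>Re w\<bar> < 1" "1 \<le> Im w"
    using assms(1) by (auto simp: U1_def)
  have "cmod (z - w) < Im w / 2"
    using assms(2) by (simp add: dist_norm norm_minus_commute)
  then have z: "\<bar>Re z - Re w\<bar> < Im w / 2" "\<bar>Im z - Im w\<bar> < Im w / 2"
    using abs_Re_le_cmod[of "z - w"] abs_Im_le_cmod[of "z - w"] by simp_all
  then show "Im w / 2 < Im z"
    by linarith
  have "\<bar>Re z\<bar> < 3 / 2 * Im w" and "\<bar>Im z + 1\<bar> < 5 / 2 * Im w"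
    using w z by linarith+
  then have "(Re z)\<^sup>2 < (3 / 2 * Im w)\<^sup>2" and "(Im z + 1)\<^sup>2 < (5 / 2 * Im w)\<^sup>2"
    using power_strict_mono[of "\<bar>_\<bar>" _ 2] by (metis abs_ge_zero power2_abs zero_less_numeral)+
  then show "(cmod (z + \<i>))\<^sup>2 < 17 / 2 * (Im w)\<^sup>2"
    unfolding cmod_power2 by (simp add: power2_eq_square algebra_simps)
qed

lemma i_in_upper_half_plane: "\<i> \<in> upper_half_plane"
  by (simp add: upper_half_plane_def)

locale holomorphic_siegel_map =
  fixes G :: "complex \<Rightarrow> complex^'n^'n"
  assumes holomorphic_entry: "\<And>i j. (\<lambda>w. G w $ i $ j) holomorphic_on upper_half_plane"
    and siegel_valued: "\<And>w. w \<in> upper_half_plane \<Longrightarrow> G w \<in> siegel_H"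
begin

lemma quad_form_bounds:
  assumes z: "z \<in> upper_half_plane"
  shows "Im (quad_form v (G \<i>)) * Im z \<le> Im (quad_form v (G z)) * (cmod (z + \<i>))\<^sup>2"
    and "cmod (quad_form v (G z) - quad_form v (G \<i>)) * Im z \<le>
           Im (quad_form v (G \<i>)) * (cmod (z + \<i>))\<^sup>2"
proof -
  have hol: "(\<lambda>w. quad_form v (G w)) holomorphic_on upper_half_plane"
    unfolding quad_form_def by (intro holomorphic_intros holomorphic_entry)
  have maps: "quad_form v (G w) \<in> upper_half_plane" if "v \<noteq> 0" "w \<in> upper_half_plane" for w
    using quad_form_in_upper_half_plane[OF siegel_valued] that by blast
  have "Im (quad_form v (G \<i>)) * Im z \<le> Im (quad_form v (G z)) * (cmod (z + \<i>))\<^sup>2 \<and>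
      cmod (quad_form v (G z) - quad_form v (G \<i>)) * Im z \<le> Im (quad_form v (G \<i>)) * (cmod (z + \<i>))\<^sup>2"
    using upper_half_plane_self_map_bounds[of "\<lambda>w. quad_form v (G w)", OF hol maps z]
    by (cases "v = 0") simp_all
  then show "Im (quad_form v (G \<i>)) * Im z \<le> Im (quad_form v (G z)) * (cmod (z + \<i>))\<^sup>2"
    and "cmod (quad_form v (G z) - quad_form v (G \<i>)) * Im z \<le>
           Im (quad_form v (G \<i>)) * (cmod (z + \<i>))\<^sup>2"
    by simp_all
qed

lemma entry_dist_bound:
  assumes B: "\<And>k l. cmod (G \<i> $ k $ l) \<le> B" and z: "z \<in> upper_half_plane"
  shows "cmod (G z $ i $ j - G \<i> $ i $ j) * Im z \<le> 3 * B * (cmod (z + \<i>))\<^sup>2"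
proof -
  define D where "D = (cmod (z + \<i>))\<^sup>2"
  define \<Delta> where "\<Delta> v = quad_form v (G z) - quad_form v (G \<i>)" for v
  have "2 * (G z $ i $ j - G \<i> $ i $ j) = \<Delta> (axis i 1 + axis j 1) - \<Delta> (axis i 1) - \<Delta> (axis j 1)"
    using quad_form_polarization[OF siegel_H_symmetric[OF siegel_valued[OF z]]]
      quad_form_polarization[OF siegel_H_symmetric[OF siegel_valued[OF i_in_upper_half_plane]]]
    by (simp add: \<Delta>_def right_diff_distrib)
  then have "2 * cmod (G z $ i $ j - G \<i> $ i $ j) =
      cmod (\<Delta> (axis i 1 + axis j 1) - \<Delta> (axis i 1) - \<Delta> (axis j 1))"
    by (metis norm_mult norm_numeral)
  also have "\<dots> \<le>
      cmod (\<Delta> (axis i 1 + axis j 1)) + cmod (\<Delta> (axis i 1)) + cmod (\<Delta> (axis j 1))"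
    by (smt (verit) norm_triangle_ineq4)
  finally have entry: "2 * cmod (G z $ i $ j - G \<i> $ i $ j) \<le>
      cmod (\<Delta> (axis i 1 + axis j 1)) + cmod (\<Delta> (axis i 1)) + cmod (\<Delta> (axis j 1))" .
  have \<Delta>_bound: "cmod (\<Delta> v) * Im z \<le> c * D" if "cmod (quad_form v (G \<i>)) \<le> c" for v c
  proof -
    have "cmod (\<Delta> v) * Im z \<le> Im (quad_form v (G \<i>)) * D"
      using quad_form_bounds(2)[OF z] by (simp add: \<Delta>_def D_def)
    also have "\<dots> \<le> c * D"
      using abs_Im_le_cmod[of "quad_form v (G \<i>)"] that by (intro mult_right_mono) (auto simp: D_def)
    finally show ?thesis .
  qed
  have four_B: "cmod (quad_form (axis i 1 + axis j 1) (G \<i>)) \<le> 4 * B"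
    unfolding quad_form_axis_add_axis using B[of i i] B[of i j] B[of j i] B[of j j]
    by (smt (verit) norm_triangle_ineq)
  have one_B: "cmod (quad_form (axis k 1) (G \<i>)) \<le> B" for k
    unfolding quad_form_axis by (rule B)
  have "0 < Im z"
    using z by (simp add: upper_half_plane_def)
  with entry have "2 * cmod (G z $ i $ j - G \<i> $ i $ j) * Im z \<le>
      cmod (\<Delta> (axis i 1 + axis j 1)) * Im z + cmod (\<Delta> (axis i 1)) * Im z +
      cmod (\<Delta> (axis j 1)) * Im z"
    by (simp add: mult_right_mono flip: distrib_right)
  also have "\<dots> \<le> 4 * B * D + B * D + B * D"
    by (intro add_mono \<Delta>_bound four_B one_B)
  finally show ?thesis
    by (simp add: D_def algebra_simps)
qed

lemma deriv_entry_bound: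
  assumes "0 < B" and B: "\<And>k l. cmod (G \<i> $ k $ l) \<le> B" and w: "w \<in> U1"
  shows "cmod (deriv (\<lambda>z. G z $ i $ j) w) \<le> 102 * B"
proof -
  define y where "y = Im w"
  have "1 \<le> y"
    using w by (simp add: U1_def y_def)
  have cball_sub: "cball w (y / 2) \<subseteq> upper_half_plane"
  proof
    fix z assume "z \<in> cball w (y / 2)"
    then have "\<bar>Im z - y\<bar> \<le> y / 2"
      using abs_Im_le_cmod[of "z - w"] by (simp add: dist_norm norm_minus_commute y_def)
    with \<open>1 \<le> y\<close> show "z \<in> upper_half_plane"
      unfolding upper_half_plane_def abs_le_iff by simp
  qed
  have "G z $ i $ j \<in> ball (G \<i> $ i $ j) (51 * B * y)" if z: "z \<in> ball w (y / 2)" for z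
  proof -
    have "z \<in> upper_half_plane"
      using z cball_sub by auto
    have "y / 2 < Im z"
      using U1_half_ball_bounds(1)[OF w z[unfolded y_def]] by (simp add: y_def)
    then have "cmod (G z $ i $ j - G \<i> $ i $ j) * (y / 2) \<le> cmod (G z $ i $ j - G \<i> $ i $ j) * Im z"
      by (intro mult_left_mono) auto
    also have "\<dots> \<le> 3 * B * (cmod (z + \<i>))\<^sup>2"
      by (rule entry_dist_bound[OF B \<open>z \<in> upper_half_plane\<close>])
    also have "\<dots> < 3 * B * (17 / 2 * y\<^sup>2)"
      using U1_half_ball_bounds(2)[OF w z[unfolded y_def]] \<open>0 < B\<close> by (simp add: y_def)
    also have "\<dots> = (51 * B * y) * (y / 2)"
      by (simp add: power2_eq_square)
    finally show ?thesis
      using \<open>1 \<le> y\<close> by (simp add: dist_norm norm_minus_commute)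
  qed
  moreover have "(\<lambda>z. G z $ i $ j) holomorphic_on ball w (y / 2)"
    using holomorphic_entry cball_sub ball_subset_cball holomorphic_on_subset by blast
  moreover have "continuous_on (cball w (y / 2)) (\<lambda>z. G z $ i $ j)"
    using holomorphic_entry cball_sub holomorphic_on_imp_continuous_on holomorphic_on_subset by blast
  ultimately have "cmod ((deriv ^^ 1) (\<lambda>z. G z $ i $ j) w) \<le> fact 1 * (51 * B * y) / (y / 2) ^ 1"
    using \<open>1 \<le> y\<close> by (intro Cauchy_higher_deriv_bound) auto
  then show ?thesis
    using \<open>1 \<le> y\<close> by simp
qed

lemma det_Im_lower_bound:
  assumes "0 < m" and m: "\<And>v. m * (v \<bullet> v) \<le> v \<bullet> (Im_mat (G \<i>) *v v)" and w: "w \<in> U1"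
  shows "(m / 5) ^ CARD('n) / (Im w) ^ CARD('n) \<le> det (Im_mat (G w))"
proof -
  define y where "y = Im w"
  have "1 \<le> y" and wH: "w \<in> upper_half_plane"
    using w by (auto simp: U1_def upper_half_plane_def y_def)
  have "m / (5 * y) * (v \<bullet> v) \<le> v \<bullet> (Im_mat (G w) *v v)" for v
  proof -
    have "m * (v \<bullet> v) * y \<le> Im (quad_form v (G \<i>)) * y"
      using m[of v] \<open>1 \<le> y\<close> by (simp add: Im_quad_form)
    also have "\<dots> \<le> Im (quad_form v (G w)) * (cmod (w + \<i>))\<^sup>2"
      using quad_form_bounds(1)[OF wH] by (simp add: y_def)
    also have "\<dots> \<le> Im (quad_form v (G w)) * (5 * y\<^sup>2)"
      using U1_norm_add_i_le[OF w] quad_form_in_upper_half_plane[OF siegel_valued[OF wH], of v]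
      by (cases "v = 0") (auto simp: y_def upper_half_plane_def intro: mult_left_mono)
    finally have "m * (v \<bullet> v) * y \<le> (v \<bullet> (Im_mat (G w) *v v)) * (5 * y) * y"
      by (simp add: Im_quad_form power2_eq_square ac_simps)
    then show ?thesis
      using \<open>1 \<le> y\<close> by (simp add: divide_le_eq ac_simps)
  qed
  moreover have "transpose (Im_mat (G w)) = Im_mat (G w)"
    using siegel_valued[OF wH] by (simp add: siegel_H_def pos_def_real_def)
  ultimately have "(m / (5 * y)) ^ CARD('n) \<le> det (Im_mat (G w))"
    using \<open>0 < m\<close> \<open>1 \<le> y\<close> by (intro det_ge_power_of_quadratic_form_ge) auto
  then show ?thesis
    by (simp add: y_def power_divide power_mult_distrib)
qed

lemma norm_det_deriv_bound:
  assumes "0 < B" and "\<And>k l. cmod (G \<i> $ k $ l) \<le> B" and "w \<in> U1"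
  shows "cmod (det (mat_deriv G w)) \<le> fact CARD('n) * (102 * B) ^ CARD('n)"
  by (rule norm_det_le) (simp add: mat_deriv_def deriv_entry_bound[OF assms])

end

theorem mainTheorem8:
  fixes K :: "'a::topological_space set"
    and F :: "'a \<Rightarrow> complex \<Rightarrow> complex^'n^'n"
  assumes "compact K"
    and "continuous_on (K \<times> upper_half_plane) (\<lambda>(u, w). F u w)"
    and "\<And>u w. u \<in> K \<Longrightarrow> w \<in> upper_half_plane \<Longrightarrow> F u w \<in> siegel_H"
    and "\<And>u i j. u \<in> K \<Longrightarrow> (\<lambda>w. F u w $ i $ j) holomorphic_on upper_half_plane"
  shows "\<exists>C1 C2. C1 > 0 \<and> (\<forall>u\<in>K. \<forall>w\<in>U1.
           det (Im_mat (F u w)) \<ge> C1 / (Im w) ^ CARD('n) \<and>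
           cmod (det (mat_deriv (F u) w)) \<le> C2)"
proof -
  have "continuous_on K (\<lambda>u. (u, \<i>))" and "(\<lambda>u. (u, \<i>)) ` K \<subseteq> K \<times> upper_half_plane"
    using i_in_upper_half_plane by (auto intro: continuous_intros)
  from continuous_on_compose2[OF assms(2) this]
  have cont: "continuous_on K (\<lambda>u. F u \<i>)"
    by simp
  obtain B where "0 < B" and B: "\<And>u k l. u \<in> K \<Longrightarrow> cmod (F u \<i> $ k $ l) \<le> B"
    using compact_entries_bounded[OF assms(1) cont] by blast
  have "continuous_on K (\<lambda>u. Im_mat (F u \<i>))"
    unfolding Im_mat_def by (intro continuous_intros cont)
  moreover have "0 < v \<bullet> (Im_mat (F u \<i>) *v v)" if "u \<in> K" and "v \<noteq> 0" for u v
    using assms(3)[OF that(1) i_in_upper_half_plane] that(2)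
    by (simp add: siegel_H_def pos_def_real_def)
  ultimately obtain m where "0 < m"
    and m: "\<And>u v. u \<in> K \<Longrightarrow> m * (v \<bullet> v) \<le> v \<bullet> (Im_mat (F u \<i>) *v v)"
    using compact_uniformly_positive_definite[OF assms(1)] by blast
  show ?thesis
  proof (intro exI conjI ballI)
    show "0 < (m / 5) ^ CARD('n)"
      using \<open>0 < m\<close> by simp
    fix u w
    assume u: "u \<in> K" and w: "w \<in> U1"
    interpret holomorphic_siegel_map "F u"
      using assms(3,4) u by unfold_locales auto
    show "(m / 5) ^ CARD('n) / (Im w) ^ CARD('n) \<le> det (Im_mat (F u w))"
      by (rule det_Im_lower_bound[OF \<open>0 < m\<close> m[OF u] w])
    show "cmod (det (mat_deriv (F u) w)) \<le> fact CARD('n) * (102 * B) ^ CARD('n)"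
      by (rule norm_det_deriv_bound[OF \<open>0 < B\<close> B[OF u] w])
  qed
qed

end
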